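(* Let $\mathrm F=(W,\bm{\Box})$ be a monotonic and transitive neighborhood frame. Then its rm-closure $\mathrm F^{\bullet}=(W,\bm{\Box}^{\bullet})$ is transitive: $\bm{\Box}^{\bullet}X\subseteq\bm{\Box}^{\bullet}\bm{\Box}^{\bullet}X$ for all $X\subseteq W$.
   Context: A neighborhood frame is $(W,\bm{\Box})$ with $W\neq\varnothing$ and $\bm{\Box}:\mathcal P(W)\to\mathcal P(W)$. It is monotonic if $X\subseteq Y$ implies $\bm{\Box}X\subseteq\bm{\Box}Y$, and transitive if $\bm{\Box}X\subseteq\bm{\Box}\bm{\Box}X$ for all $X$. The supplementation of a function $\bm{\Box}'$ is $\bm{\Box}'^{\#}X=\bigcup\{\bm{\Box}'Y:Y\subseteq X\}$; the intersection closure is $\bm{\Box}'^{*}X=\bigcup\{\bm{\Box}'X_1\cap\dots\cap\bm{\Box}'X_n:n\ge1,\ X=X_1\cap\dots\cap X_n\}$. The rm-closure is $\bm{\Box}^{\bullet}=\bm{\Box}^{*\#}$ (the supplementation of the intersection closure of $\bm{\Box}$), which equals $\bm{\Box}^{\#*}$. *)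

theory Defs
  imports Main
begin

(* A neighborhood frame (W, Box) is represented by a type 'a (playing the role of W,
   automatically nonempty) and a function Box :: 'a set => 'a set on P(W). *)

definition monotonic_nf :: "('a set \<Rightarrow> 'a set) \<Rightarrow> bool" where
  "monotonic_nf B \<longleftrightarrow> (\<forall>X Y. X \<subseteq> Y \<longrightarrow> B X \<subseteq> B Y)"

definition transitive_nf :: "('a set \<Rightarrow> 'a set) \<Rightarrow> bool" where
  "transitive_nf B \<longleftrightarrow> (\<forall>X. B X \<subseteq> B (B X))"

definition suppl :: "('a set \<Rightarrow> 'a set) \<Rightarrow> 'a set \<Rightarrow> 'a set" where
  "suppl B X = \<Union>{B Y | Y. Y \<subseteq> X}"

(* intersection closure: B* X = \<Union>{B X1 \<inter> ... \<inter> B Xn | n \<ge> 1, X = X1 \<inter> ... \<inter> Xn};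
   the finite family X1,...,Xn is represented by a nonempty list *)
definition icl :: "('a set \<Rightarrow> 'a set) \<Rightarrow> 'a set \<Rightarrow> 'a set" where
  "icl B X = \<Union>{\<Inter>(B ` set Xs) | Xs. Xs \<noteq> [] \<and> X = \<Inter>(set Xs)}"

definition rm_closure :: "('a set \<Rightarrow> 'a set) \<Rightarrow> 'a set \<Rightarrow> 'a set" where
  "rm_closure B = suppl (icl B)"

end

theory Submission
  imports Defs
begin

(* If x \<in> B Y1 \<inter> ... \<inter> B Yn with Y1 \<inter> ... \<inter> Yn \<subseteq> X, then B Y1 \<inter> ... \<inter> B Yn \<subseteq> B\<bullet> X,
   and transitivity of B gives x \<in> B (B Yi) for every i; so the sets B Yi witness
   x \<in> B\<bullet> (B\<bullet> X). *)

lemma mem_rm_closure_iff: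
  "x \<in> rm_closure B X \<longleftrightarrow>
     (\<exists>Ys. Ys \<noteq> [] \<and> \<Inter>(set Ys) \<subseteq> X \<and> (\<forall>Y\<in>set Ys. x \<in> B Y))"
  unfolding rm_closure_def suppl_def icl_def by blast

lemma Inter_image_subset_rm_closure:
  assumes "Ys \<noteq> []" and "\<Inter>(set Ys) \<subseteq> X"
  shows "\<Inter>(B ` set Ys) \<subseteq> rm_closure B X"
  using assms by (auto simp: mem_rm_closure_iff)

lemma transitive_nf_rm_closure:
  assumes "transitive_nf B"
  shows "transitive_nf (rm_closure B)"
  unfolding transitive_nf_def
proof (intro allI subsetI)
  fix X x
  assume "x \<in> rm_closure B X"
  then obtain Ys where Ys: "Ys \<noteq> []" "\<Inter>(set Ys) \<subseteq> X" "\<forall>Y\<in>set Ys. x \<in> B Y"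
    by (auto simp: mem_rm_closure_iff)
  have "\<Inter>(set (map B Ys)) \<subseteq> rm_closure B X"
    using Inter_image_subset_rm_closure[OF Ys(1,2)] by simp
  moreover have "\<forall>Z\<in>set (map B Ys). x \<in> B Z"
    using Ys(3) assms unfolding transitive_nf_def by auto
  moreover have "map B Ys \<noteq> []"
    using Ys(1) by simp
  ultimately show "x \<in> rm_closure B (rm_closure B X)"
    unfolding mem_rm_closure_iff by blast
qed

theorem mainTheorem11:
  fixes B :: "'a set \<Rightarrow> 'a set"
  assumes "monotonic_nf B" and "transitive_nf B"
  shows "transitive_nf (rm_closure B)"
  using assms(2) by (rule transitive_nf_rm_closure)

end
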